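(* For every integer $n$ with $0\le n\le D$, $$\max_{\mathbf w\in\mathbb C^D:\ \|\mathbf w\|_0=n} q(\mathbf w)=\begin{cases}1 & n=0,\\ \dfrac{2^{n}-1}{4^{n-1}} & 1\le n\le D.\end{cases}$$
   Context: Let $D$ be a positive integer and $\mathcal S=\{(\pm1\pm i)/\sqrt2\}\subset\mathbb C$ (QPSK). $\|\mathbf w\|_0$ is the number of nonzero entries of $\mathbf w$. For $\mathbf s\in\mathcal S^D$ define $\mathfrak e(\mathbf s)=\{\tilde{\mathbf s}-\mathbf s:\tilde{\mathbf s}\in\mathcal S^D\setminus\{\mathbf s\}\}$. Two vectors $\mathbf a,\mathbf b$ are collinear if $[\mathbf a,\mathbf b]$ has rank at most $1$. For $\mathbf w\in\mathbb C^D$, $q(\mathbf w)=\Pr\big(\exists\,\mathbf e\in\mathfrak e(\mathbf s)\text{ collinear with }\mathbf w\big)$ with $\mathbf s$ uniformly distributed on $\mathcal S^D$. *)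

theory Defs
  imports "HOL-Analysis.Analysis" "HOL-Probability.Probability"
begin

definition QPSK :: "complex set" where
  "QPSK = {(a + b * \<i>) / complex_of_real (sqrt 2) | a b. a \<in> {-1, 1} \<and> b \<in> {-1, 1}}"

text \<open>S^D, vectors indexed by the finite type 'd with D = CARD('d).\<close>
definition QPSK_vecs :: "(complex ^ 'd) set" where
  "QPSK_vecs = {s. \<forall>i. s $ i \<in> QPSK}"

definition norm0 :: "complex ^ 'd \<Rightarrow> nat" where
  "norm0 w = card {i. w $ i \<noteq> 0}"

definition err_set :: "complex ^ 'd \<Rightarrow> (complex ^ 'd) set" where
  "err_set s = {s' - s | s'. s' \<in> QPSK_vecs \<and> s' \<noteq> s}"

text \<open>[a, b] has (complex) rank at most 1: both columns lie in a common
  complex line, i.e. in the span of a single vector.\<close>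
definition collinear_pair :: "complex ^ 'd \<Rightarrow> complex ^ 'd \<Rightarrow> bool" where
  "collinear_pair a b \<longleftrightarrow> (\<exists>v c1 c2. a = c1 *s v \<and> b = c2 *s v)"

definition q :: "complex ^ 'd \<Rightarrow> real" where
  "q w = measure_pmf.prob (pmf_of_set (QPSK_vecs :: (complex ^ 'd) set))
           {s. \<exists>e \<in> err_set s. collinear_pair e w}"

end

(*
  Every point s of QPSK generates it as {s, i s, -s, -i s}, so the nonzero steps z with
  s + z in QPSK are (i - 1) s, -(1 + i) s and -2 s, of lengths sqrt 2, sqrt 2 and 2.

  For w <> 0, q(w) counts the s in QPSK^D with s + c w in QPSK^D for some c <> 0.  Fix a
  coordinate k with w_k <> 0 and the symbol s0 = s_k.  Then c w_k is one of the three
  steps out of s0, i.e. c is a, i a or (1 + i) a with a = (i - 1) s0 / w_k, and for each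
  such c the admissible s form a box.  The boxes for a and i a have factors of equal
  size, at most 1 at k, 2 elsewhere on the support of w and 4 off it.  The box for
  (1 + i) a lies in their intersection unless the a-box is empty: for a step z, (1 + i) z
  is a step only if |z| = sqrt 2, and then i z is a step too.  If all factors of the
  a-box are maximal, its intersection with the (i a)-box meets every factor; otherwise
  some factor is at most half its bound.  Inclusion-exclusion thus bounds the number of
  s with s_k = s0 by 2 * 2^(n-1) 4^(D-n) - 4^(D-n) = (2^n - 1) 4^(D-n), with equality
  when all nonzero entries of w coincide.  Summing over the four values of s0 and
  dividing by 4^D gives (2^n - 1) / 4^(n-1).
*)

theory Submission
  imports Defs
begin

section \<open>Boxes of vectors\<close>

definition vec_Pi :: "('d \<Rightarrow> 'a set) \<Rightarrow> ('a ^ 'd) set" where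
  "vec_Pi B = {s. \<forall>j. s $ j \<in> B j}"

lemma bij_betw_vec_nth_vec_Pi: "bij_betw vec_nth (vec_Pi B) (Pi\<^sub>E UNIV B)"
proof (rule bij_betwI')
  show "\<And>x y. x \<in> vec_Pi B \<Longrightarrow> y \<in> vec_Pi B \<Longrightarrow> (vec_nth x = vec_nth y) = (x = y)"
    by (simp add: vec_nth_inject)
  show "\<And>x. x \<in> vec_Pi B \<Longrightarrow> vec_nth x \<in> Pi\<^sub>E UNIV B"
    by (simp add: vec_Pi_def PiE_iff)
  show "\<And>f. f \<in> Pi\<^sub>E UNIV B \<Longrightarrow> \<exists>x\<in>vec_Pi B. f = vec_nth x"
    by (rule_tac x = "vec_lambda f" in bexI) (auto simp: vec_Pi_def)
qed

lemma card_vec_Pi: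
  fixes B :: "'d::finite \<Rightarrow> 'a set"
  shows "card (vec_Pi B) = (\<Prod>j\<in>UNIV. card (B j))"
  using bij_betw_same_card[OF bij_betw_vec_nth_vec_Pi] by (simp add: card_PiE)

lemma finite_vec_Pi:
  fixes B :: "'d::finite \<Rightarrow> 'a set"
  assumes "\<And>j. finite (B j)"
  shows "finite (vec_Pi B)"
  using bij_betw_finite[OF bij_betw_vec_nth_vec_Pi[of B]] finite_PiE[of UNIV B] assms by simp

lemma vec_Pi_Int: "vec_Pi B \<inter> vec_Pi C = vec_Pi (\<lambda>j. B j \<inter> C j)"
  by (auto simp: vec_Pi_def)

lemma vec_Pi_mono: "(\<And>j. B j \<subseteq> C j) \<Longrightarrow> vec_Pi B \<subseteq> vec_Pi C"
  by (auto simp: vec_Pi_def)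

lemma vec_Pi_empty: "B j = {} \<Longrightarrow> vec_Pi B = {}"
  by (auto simp: vec_Pi_def)

lemma card_vec_Pi_Un:
  fixes B C :: "'d::finite \<Rightarrow> 'a set"
  assumes "\<And>j. finite (B j)" "\<And>j. finite (C j)" "\<And>j. card (C j) = card (B j)"
  shows "card (vec_Pi B \<union> vec_Pi C) = 2 * (\<Prod>j\<in>UNIV. card (B j)) - (\<Prod>j\<in>UNIV. card (B j \<inter> C j))"
  using card_Un_Int[OF finite_vec_Pi finite_vec_Pi, of B C] assms
  by (simp add: vec_Pi_Int card_vec_Pi)

lemma prod_le_half:
  fixes f g :: "'d::finite \<Rightarrow> nat"
  assumes "\<And>j. f j \<le> g j" "2 * f k \<le> g k"
  shows "2 * (\<Prod>j\<in>UNIV. f j) \<le> (\<Prod>j\<in>UNIV. g j)"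
proof -
  have "2 * (\<Prod>j\<in>UNIV. f j) = 2 * f k * (\<Prod>j\<in>UNIV - {k}. f j)"
    by (simp add: prod.remove[of UNIV k])
  also have "\<dots> \<le> g k * (\<Prod>j\<in>UNIV - {k}. g j)"
    using assms by (intro mult_le_mono prod_mono) auto
  also have "\<dots> = (\<Prod>j\<in>UNIV. g j)"
    by (simp add: prod.remove[of UNIV k])
  finally show ?thesis .
qed

lemma card_vec_Pi_Un3_le:
  fixes B C E :: "'d::finite \<Rightarrow> 'a set" and g h :: "'d \<Rightarrow> nat"
  assumes fin: "\<And>j. finite (B j)" "\<And>j. finite (C j)" "\<And>j. finite (E j)"
    and card_C: "\<And>j. card (C j) = card (B j)"
    and card_B_le: "\<And>j. card (B j) \<le> g j" and card_E_le: "\<And>j. card (E j) \<le> g j"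
    and gap: "\<And>j. card (B j) < g j \<Longrightarrow> 2 * card (B j) \<le> g j"
    and full: "\<And>j. card (B j) = g j \<Longrightarrow> h j \<le> card (B j \<inter> C j)"
    and E_sub: "\<And>j. B j \<noteq> {} \<Longrightarrow> E j \<subseteq> B j \<inter> C j"
    and h_le_g: "(\<Prod>j\<in>UNIV. h j) \<le> (\<Prod>j\<in>UNIV. g j)"
  shows "card (vec_Pi B \<union> vec_Pi C \<union> vec_Pi E) \<le> 2 * (\<Prod>j\<in>UNIV. g j) - (\<Prod>j\<in>UNIV. h j)"
proof (cases "\<exists>j. B j = {}")
  case True
  then obtain j where "B j = {}" by blast
  moreover from this have "C j = {}" using card_C[of j] fin(2)[of j] by simp
  ultimately have "vec_Pi B \<union> vec_Pi C \<union> vec_Pi E = vec_Pi E" by (simp add: vec_Pi_empty)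
  moreover have "card (vec_Pi E) \<le> (\<Prod>j\<in>UNIV. g j)"
    unfolding card_vec_Pi by (rule prod_mono) (simp add: card_E_le)
  ultimately show ?thesis using h_le_g by simp
next
  case False
  then have "vec_Pi E \<subseteq> vec_Pi B \<inter> vec_Pi C"
    unfolding vec_Pi_Int by (intro vec_Pi_mono E_sub) blast
  then have "vec_Pi B \<union> vec_Pi C \<union> vec_Pi E = vec_Pi B \<union> vec_Pi C" by blast
  moreover have "2 * (\<Prod>j\<in>UNIV. card (B j)) - (\<Prod>j\<in>UNIV. card (B j \<inter> C j))
      \<le> 2 * (\<Prod>j\<in>UNIV. g j) - (\<Prod>j\<in>UNIV. h j)"
  proof (cases "\<forall>j. card (B j) = g j")
    case True
    then have "(\<Prod>j\<in>UNIV. h j) \<le> (\<Prod>j\<in>UNIV. card (B j \<inter> C j))"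
      by (intro prod_mono) (simp add: full)
    with True show ?thesis by simp
  next
    case False
    then obtain k where "card (B k) < g k" using card_B_le le_neq_implies_less by blast
    then have "2 * (\<Prod>j\<in>UNIV. card (B j)) \<le> (\<Prod>j\<in>UNIV. g j)"
      by (intro prod_le_half[where k = k] card_B_le gap)
    then show ?thesis using h_le_g by linarith
  qed
  ultimately show ?thesis by (simp add: card_vec_Pi_Un fin card_C)
qed

lemma card_vec_Pi_Un_ge:
  fixes B C :: "'d::finite \<Rightarrow> 'a set" and g h :: "'d \<Rightarrow> nat"
  assumes "\<And>j. finite (B j)" "\<And>j. finite (C j)" "\<And>j. card (C j) = card (B j)"
    and "\<And>j. g j \<le> card (B j)" "\<And>j. card (B j \<inter> C j) \<le> h j"
  shows "2 * (\<Prod>j\<in>UNIV. g j) - (\<Prod>j\<in>UNIV. h j) \<le> card (vec_Pi B \<union> vec_Pi C)"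
proof -
  have "(\<Prod>j\<in>UNIV. g j) \<le> (\<Prod>j\<in>UNIV. card (B j))" "(\<Prod>j\<in>UNIV. card (B j \<inter> C j)) \<le> (\<Prod>j\<in>UNIV. h j)"
    using assms by (simp_all add: prod_mono)
  then show ?thesis unfolding card_vec_Pi_Un[OF assms(1-3)] by linarith
qed

section \<open>The QPSK constellation\<close>

lemma norm_1_plus_i: "norm (1 + \<i>) = sqrt 2"
  and norm_i_minus_1: "norm (\<i> - 1) = sqrt 2"
  and norm_minus_1_minus_i: "norm (- 1 - \<i>) = sqrt 2"
  by (simp_all add: cmod_def)

lemma sqrt_2_neq_2: "sqrt 2 \<noteq> 2"
proof
  assume "sqrt 2 = 2"
  then have "(sqrt 2)\<^sup>2 = 2\<^sup>2" by simp
  then show False by simp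
qed

lemma QPSK_orbit: "\<exists>\<omega>. norm \<omega> = 1 \<and> QPSK = {\<omega>, \<i> * \<omega>, - \<omega>, - \<i> * \<omega>}"
proof (intro exI conjI)
  let ?\<omega> = "(1 + \<i>) / complex_of_real (sqrt 2)"
  show "norm ?\<omega> = 1" by (simp add: norm_divide norm_1_plus_i)
  have "QPSK = (\<lambda>z. z / complex_of_real (sqrt 2)) ` {1 + \<i>, - 1 + \<i>, - 1 - \<i>, 1 - \<i>}"
    unfolding QPSK_def image_insert image_empty
    by (auto; metis add.commute diff_conv_add_uminus mult_1 mult_minus_left)
  also have "{1 + \<i>, - 1 + \<i>, - 1 - \<i>, 1 - \<i>} = {1 + \<i>, \<i> * (1 + \<i>), - (1 + \<i>), - \<i> * (1 + \<i>)}"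
  proof -
    have "\<i> * (1 + \<i>) = - 1 + \<i>" "- \<i> * (1 + \<i>) = 1 - \<i>" "- (1 + \<i>) = - 1 - \<i>"
      by (simp_all add: complex_eq_iff)
    then show ?thesis by simp
  qed
  also have "(\<lambda>z. z / complex_of_real (sqrt 2)) ` \<dots> = {?\<omega>, \<i> * ?\<omega>, - ?\<omega>, - \<i> * ?\<omega>}"
    by (simp only: image_insert image_empty times_divide_eq_right minus_divide_left)
  finally show "QPSK = {?\<omega>, \<i> * ?\<omega>, - ?\<omega>, - \<i> * ?\<omega>}" .
qed

lemma rotations_eq:
  fixes x s :: complex
  assumes "s \<in> {x, \<i> * x, - x, - \<i> * x}"
  shows "{x, \<i> * x, - x, - \<i> * x} = {s, \<i> * s, - s, - \<i> * s}"
  using assms by (auto simp: algebra_simps)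

lemma card_rotations:
  fixes x :: complex
  assumes "x \<noteq> 0"
  shows "card {x, \<i> * x, - x, - \<i> * x} = 4"
proof -
  have ne: "a * x \<noteq> b * x" if "a \<noteq> b" for a b using assms that by simp
  have "x \<noteq> \<i> * x" using ne[of 1 "\<i>"] by simp
  moreover have "x \<noteq> - x" using assms by simp
  moreover have "x \<noteq> - \<i> * x" using ne[of 1 "-\<i>"] by (simp add: complex_eq_iff)
  moreover have "\<i> * x \<noteq> - x" using ne[of "\<i>" "-1"] by (simp add: complex_eq_iff)
  moreover have "\<i> * x \<noteq> - \<i> * x" using assms by simp
  moreover have "- x \<noteq> - \<i> * x" using ne[of 1 "\<i>"] by simp
  ultimately show ?thesis by simp
qed

lemma QPSK_rotations: "s \<in> QPSK \<Longrightarrow> QPSK = {s, \<i> * s, - s, - \<i> * s}"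
  using QPSK_orbit rotations_eq by metis

lemma finite_QPSK: "finite QPSK"
  and card_QPSK: "card QPSK = 4"
  and norm_QPSK: "s \<in> QPSK \<Longrightarrow> norm s = 1"
proof -
  obtain \<omega> where \<omega>: "norm \<omega> = 1" and eq: "QPSK = {\<omega>, \<i> * \<omega>, - \<omega>, - \<i> * \<omega>}"
    using QPSK_orbit by blast
  show "finite QPSK" unfolding eq by simp
  show "card QPSK = 4" unfolding eq using \<omega> by (intro card_rotations) auto
  show "s \<in> QPSK \<Longrightarrow> norm s = 1" unfolding eq using \<omega> by (auto simp: norm_mult)
qed

lemma QPSK_nonzero: "s \<in> QPSK \<Longrightarrow> s \<noteq> 0"
  using norm_QPSK by force

lemma i_minus_1_mult_QPSK_nonzero: "s \<in> QPSK \<Longrightarrow> (\<i> - 1) * s \<noteq> 0"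
  using QPSK_nonzero[of s] by (simp add: complex_eq_iff[of "\<i>"])

lemma QPSK_add_iff:
  assumes "s \<in> QPSK"
  shows "s + z \<in> QPSK \<longleftrightarrow> z \<in> {0, (\<i> - 1) * s, - 2 * s, - (1 + \<i>) * s}"
proof -
  have "s + z = t \<longleftrightarrow> z = t - s" for t by auto
  then show ?thesis
    by (subst QPSK_rotations[OF assms]) (simp add: algebra_simps eq_neg_iff_add_eq_0)
qed

lemma QPSK_mult_i:
  assumes "s \<in> QPSK"
  shows "\<i> * s \<in> QPSK"
  by (subst QPSK_rotations[OF assms]) simp

lemma QPSK_uminus:
  assumes "s \<in> QPSK"
  shows "- s \<in> QPSK"
  by (subst QPSK_rotations[OF assms]) simp

definition shift_dom :: "complex \<Rightarrow> complex set" where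
  "shift_dom z = {s \<in> QPSK. s + z \<in> QPSK}"

lemma shift_dom_zero [simp]: "shift_dom 0 = QPSK"
  by (simp add: shift_dom_def)

lemma finite_shift_dom [simp]: "finite (shift_dom z)"
  by (simp add: shift_dom_def finite_QPSK)

lemma shift_dom_mult_i: "shift_dom (\<i> * z) = (\<lambda>s. \<i> * s) ` shift_dom z"
proof (intro equalityI subsetI)
  fix x assume "x \<in> shift_dom (\<i> * z)"
  then have "x \<in> QPSK" "x + \<i> * z \<in> QPSK" by (simp_all add: shift_dom_def)
  moreover have "- \<i> * x + z = - (\<i> * (x + \<i> * z))" by (simp add: algebra_simps)
  ultimately have "- \<i> * x \<in> shift_dom z"
    unfolding shift_dom_def by (simp add: QPSK_mult_i QPSK_uminus)
  moreover have "x = \<i> * (- \<i> * x)" by simp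
  ultimately show "x \<in> (\<lambda>s. \<i> * s) ` shift_dom z" by blast
next
  fix x assume "x \<in> (\<lambda>s. \<i> * s) ` shift_dom z"
  then show "x \<in> shift_dom (\<i> * z)"
    using QPSK_mult_i by (auto simp: shift_dom_def distrib_left[symmetric])
qed

lemma card_shift_dom_mult_i: "card (shift_dom (\<i> * z)) = card (shift_dom z)"
  unfolding shift_dom_mult_i by (rule card_image) (simp add: inj_on_def)

lemma mem_shift_dom_cases:
  assumes "x \<in> shift_dom z" "z \<noteq> 0"
  shows "norm z = 2 \<and> x = - z / 2 \<or> norm z = sqrt 2 \<and> x \<in> {- (1 + \<i>) * z / 2, (\<i> - 1) * z / 2}"
proof -
  have x: "x \<in> QPSK" "z \<in> {(\<i> - 1) * x, - 2 * x, - (1 + \<i>) * x}"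
    using QPSK_add_iff assms by (auto simp: shift_dom_def)
  have "norm x = 1" using norm_QPSK x(1) by blast
  from x(2) consider "z = (\<i> - 1) * x" | "z = - 2 * x" | "z = - (1 + \<i>) * x" by blast
  then show ?thesis
  proof cases
    case 1
    moreover have "- (1 + \<i>) * (\<i> - 1) = 2" by (simp add: complex_eq_iff)
    ultimately show ?thesis using \<open>norm x = 1\<close>
      by (simp add: norm_mult norm_i_minus_1 mult.assoc[symmetric])
  next
    case 2
    then show ?thesis using \<open>norm x = 1\<close> by (simp add: norm_mult)
  next
    case 3
    moreover have "(\<i> - 1) * - (1 + \<i>) = 2" by (simp add: complex_eq_iff)
    ultimately show ?thesis using \<open>norm x = 1\<close>
      by (simp add: norm_mult norm_minus_1_minus_i mult.assoc[symmetric])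
  qed
qed

lemma shift_dom_subset:
  assumes "z \<noteq> 0"
  shows "shift_dom z \<subseteq> {- z / 2} \<or> shift_dom z \<subseteq> {- (1 + \<i>) * z / 2, (\<i> - 1) * z / 2}"
proof (cases "norm z = 2")
  case True
  then have "shift_dom z \<subseteq> {- z / 2}" using mem_shift_dom_cases[OF _ assms] sqrt_2_neq_2 by auto
  then show ?thesis ..
next
  case False
  then have "shift_dom z \<subseteq> {- (1 + \<i>) * z / 2, (\<i> - 1) * z / 2}"
    using mem_shift_dom_cases[OF _ assms] by (meson subsetI)
  then show ?thesis ..
qed

lemma card_shift_dom_le:
  assumes "z \<noteq> 0"
  shows "card (shift_dom z) \<le> 2"
  using shift_dom_subset[OF assms]
proof
  assume "shift_dom z \<subseteq> {- z / 2}"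
  from card_mono[OF _ this] show ?thesis by simp
next
  assume "shift_dom z \<subseteq> {- (1 + \<i>) * z / 2, (\<i> - 1) * z / 2}"
  moreover have "card {a, b} \<le> 2" for a b :: complex by (cases "a = b") simp_all
  ultimately show ?thesis by (meson card_mono finite.emptyI finite.insertI order_trans)
qed

lemma norm_shift_cases:
  assumes "x \<in> shift_dom z" "z \<noteq> 0"
  shows "norm z = sqrt 2 \<or> norm z = 2"
  using mem_shift_dom_cases[OF assms] by blast

lemma shift_dom_Int_mult_i_iff:
  assumes "z \<noteq> 0"
  shows "x \<in> shift_dom z \<inter> shift_dom (\<i> * z) \<longleftrightarrow> x \<in> QPSK \<and> z = (\<i> - 1) * x"
proof
  assume x: "x \<in> shift_dom z \<inter> shift_dom (\<i> * z)"
  then have "x \<in> QPSK" by (simp add: shift_dom_def)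
  then have "x \<noteq> 0" by (rule QPSK_nonzero)
  have "\<i> * z \<noteq> 0" using assms by simp
  then have "z \<in> {(\<i> - 1) * x, - 2 * x, - (1 + \<i>) * x}" "\<i> * z \<in> {(\<i> - 1) * x, - 2 * x, - (1 + \<i>) * x}"
    using x assms QPSK_add_iff[OF \<open>x \<in> QPSK\<close>] by (auto simp: shift_dom_def)
  then have "z \<in> (\<lambda>c. c * x) ` {\<i> - 1, - 2, - (1 + \<i>)}" "\<i> * z \<in> (\<lambda>c. c * x) ` {\<i> - 1, - 2, - (1 + \<i>)}"
    unfolding image_insert image_empty .
  then obtain c d where cd: "c \<in> {\<i> - 1, - 2, - (1 + \<i>)}" "d \<in> {\<i> - 1, - 2, - (1 + \<i>)}"
    "z = c * x" "\<i> * z = d * x"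
    by blast
  then have "(\<i> * c) * x = d * x" by (simp add: mult.assoc)
  then have "\<i> * c = d" using \<open>x \<noteq> 0\<close> by simp
  then have "c = \<i> - 1" using cd(1,2) by (auto simp: complex_eq_iff)
  then show "x \<in> QPSK \<and> z = (\<i> - 1) * x" using cd(3) \<open>x \<in> QPSK\<close> by simp
next
  assume x: "x \<in> QPSK \<and> z = (\<i> - 1) * x"
  have "x + (\<i> - 1) * x = \<i> * x" "x + \<i> * ((\<i> - 1) * x) = - (\<i> * x)"
    by (simp_all add: algebra_simps)
  then show "x \<in> shift_dom z \<inter> shift_dom (\<i> * z)"
    using x QPSK_mult_i QPSK_uminus by (simp add: shift_dom_def)
qed

lemma card_shift_dom_Int_mult_i_le:
  assumes "z \<noteq> 0"
  shows "card (shift_dom z \<inter> shift_dom (\<i> * z)) \<le> 1"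
proof -
  have "\<i> - 1 \<noteq> 0" by (simp add: complex_eq_iff)
  then have "shift_dom z \<inter> shift_dom (\<i> * z) \<subseteq> {z / (\<i> - 1)}"
    using shift_dom_Int_mult_i_iff[OF assms] nonzero_mult_div_cancel_left by fastforce
  from card_mono[OF _ this] show ?thesis by simp
qed

lemma shift_dom_Int_mult_i_nonempty:
  assumes "card (shift_dom z) = 2"
  shows "shift_dom z \<inter> shift_dom (\<i> * z) \<noteq> {}"
proof -
  have "z \<noteq> 0" using assms card_QPSK by auto
  let ?x = "- (1 + \<i>) * z / 2"
  have "?x \<in> shift_dom z"
  proof (rule ccontr)
    assume "?x \<notin> shift_dom z"
    then have "shift_dom z \<subseteq> {- z / 2} \<or> shift_dom z \<subseteq> {(\<i> - 1) * z / 2}"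
      using shift_dom_subset[OF \<open>z \<noteq> 0\<close>] by blast
    then have "card (shift_dom z) \<le> 1" using card_mono[of "{_}" "shift_dom z"] by force
    with assms show False by simp
  qed
  moreover have "(\<i> - 1) * ?x = z" by (simp add: complex_eq_iff)
  ultimately have "?x \<in> QPSK \<and> z = (\<i> - 1) * ?x" by (simp add: shift_dom_def)
  then have "?x \<in> shift_dom z \<inter> shift_dom (\<i> * z)"
    using shift_dom_Int_mult_i_iff[OF \<open>z \<noteq> 0\<close>] by blast
  then show ?thesis by blast
qed

lemma card_shift_dom_i_minus_1_ge:
  assumes "s \<in> QPSK"
  shows "2 \<le> card (shift_dom ((\<i> - 1) * s))"
proof -
  have "s \<noteq> 0" using QPSK_nonzero[OF assms] .
  have "s + (\<i> - 1) * s = \<i> * s" "- \<i> * s + (\<i> - 1) * s = - s" by (simp_all add: algebra_simps)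
  then have "{s, - \<i> * s} \<subseteq> shift_dom ((\<i> - 1) * s)"
    using assms QPSK_mult_i QPSK_uminus by (auto simp: shift_dom_def)
  moreover have "1 * s \<noteq> - \<i> * s" using \<open>s \<noteq> 0\<close> by (subst mult_cancel_right) (simp add: complex_eq_iff)
  ultimately show ?thesis using card_mono[of "shift_dom ((\<i> - 1) * s)" "{s, - \<i> * s}"] by simp
qed

lemma shift_dom_mult_1_plus_i:
  assumes "shift_dom z \<noteq> {}"
  shows "shift_dom ((1 + \<i>) * z) \<subseteq> shift_dom z \<inter> shift_dom (\<i> * z)"
proof (cases "z = 0")
  case False
  obtain x where "x \<in> shift_dom z" using assms by blast
  then have nz: "norm z \<noteq> 1" using norm_shift_cases[OF _ False] by auto
  show ?thesis
  proof
    fix y assume y: "y \<in> shift_dom ((1 + \<i>) * z)"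
    then have "y \<in> QPSK" by (simp add: shift_dom_def)
    have "1 + \<i> \<noteq> 0" by (simp add: complex_eq_iff)
    then have "(1 + \<i>) * z \<noteq> 0" using False by simp
    then have mem: "(1 + \<i>) * z \<in> {(\<i> - 1) * y, - 2 * y, - (1 + \<i>) * y}"
      using y QPSK_add_iff[OF \<open>y \<in> QPSK\<close>] by (simp add: shift_dom_def)
    have "norm ((1 + \<i>) * z) \<noteq> sqrt 2" using nz by (simp add: norm_mult norm_1_plus_i)
    moreover have "norm y = 1" using norm_QPSK \<open>y \<in> QPSK\<close> by blast
    then have "norm ((\<i> - 1) * y) = sqrt 2" "norm (- (1 + \<i>) * y) = sqrt 2"
      by (simp_all add: norm_mult norm_i_minus_1 norm_minus_1_minus_i)
    ultimately have "(1 + \<i>) * z = - 2 * y" using mem by auto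
    also have "\<dots> = (1 + \<i>) * ((\<i> - 1) * y)"
      by (simp add: mult.assoc[symmetric] complex_eq_iff)
    finally have "(1 + \<i>) * z = (1 + \<i>) * ((\<i> - 1) * y)" .
    then have "z = (\<i> - 1) * y" using \<open>1 + \<i> \<noteq> 0\<close> by simp
    then show "y \<in> shift_dom z \<inter> shift_dom (\<i> * z)"
      using shift_dom_Int_mult_i_iff[OF False] \<open>y \<in> QPSK\<close> by blast
  qed
qed simp

section \<open>Error vectors collinear with a direction\<close>

lemma QPSK_vecs_eq_vec_Pi: "QPSK_vecs = vec_Pi (\<lambda>_. QPSK)"
  unfolding QPSK_vecs_def vec_Pi_def ..

lemma finite_QPSK_vecs: "finite (QPSK_vecs :: (complex ^ 'd) set)"
  by (simp add: QPSK_vecs_eq_vec_Pi finite_vec_Pi finite_QPSK)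

lemma card_QPSK_vecs: "card (QPSK_vecs :: (complex ^ 'd) set) = 4 ^ CARD('d)"
  by (simp add: QPSK_vecs_eq_vec_Pi card_vec_Pi card_QPSK)

lemma q_eq_card:
  fixes w :: "complex ^ 'd"
  shows "q w = card (QPSK_vecs \<inter> {s. \<exists>e\<in>err_set s. collinear_pair e w}) / 4 ^ CARD('d)"
proof -
  have "QPSK_vecs \<noteq> ({} :: (complex ^ 'd) set)"
    using card_QPSK_vecs[where 'd = 'd] by (metis card.empty power_not_zero zero_neq_numeral)
  then show ?thesis
    unfolding q_def by (simp add: measure_pmf_of_set finite_QPSK_vecs card_QPSK_vecs)
qed

lemma collinear_pair_iff:
  assumes "w \<noteq> 0"
  shows "collinear_pair e w \<longleftrightarrow> (\<exists>c. e = c *s w)"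
proof
  assume "collinear_pair e w"
  then obtain v c1 c2 where "e = c1 *s v" "w = c2 *s v" unfolding collinear_pair_def by blast
  moreover from this have "c2 \<noteq> 0" using assms by auto
  ultimately have "e = (c1 / c2) *s w" by (simp add: vec_eq_iff)
  then show "\<exists>c. e = c *s w" ..
next
  assume "\<exists>c. e = c *s w"
  then obtain c where "e = c *s w" ..
  then show "collinear_pair e w"
    unfolding collinear_pair_def by (intro exI[of _ w] exI[of _ c] exI[of _ 1]) simp
qed

definition aligned :: "complex ^ 'd \<Rightarrow> (complex ^ 'd) set" where
  "aligned w = {s \<in> QPSK_vecs. \<exists>c. c \<noteq> 0 \<and> s + c *s w \<in> QPSK_vecs}"

lemma ex_err_collinear_iff:
  assumes "w \<noteq> 0"
  shows "(\<exists>e\<in>err_set s. collinear_pair e w) \<longleftrightarrow> (\<exists>c. c \<noteq> 0 \<and> s + c *s w \<in> QPSK_vecs)"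
proof
  assume "\<exists>e\<in>err_set s. collinear_pair e w"
  then obtain s' c where "s' \<in> QPSK_vecs" "s' \<noteq> s" "s' - s = c *s w"
    unfolding err_set_def collinear_pair_iff[OF assms] by blast
  then have "c \<noteq> 0 \<and> s + c *s w \<in> QPSK_vecs" by (auto simp: algebra_simps)
  then show "\<exists>c. c \<noteq> 0 \<and> s + c *s w \<in> QPSK_vecs" ..
next
  assume "\<exists>c. c \<noteq> 0 \<and> s + c *s w \<in> QPSK_vecs"
  then obtain c where "c \<noteq> 0" "s + c *s w \<in> QPSK_vecs" by blast
  moreover have "s + c *s w \<noteq> s" using \<open>c \<noteq> 0\<close> assms by (auto simp: vec_eq_iff)
  ultimately show "\<exists>e\<in>err_set s. collinear_pair e w"
    unfolding err_set_def collinear_pair_iff[OF assms] by force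
qed

lemma q_eq_card_aligned:
  fixes w :: "complex ^ 'd"
  assumes "w \<noteq> 0"
  shows "q w = card (aligned w) / 4 ^ CARD('d)"
proof -
  have "QPSK_vecs \<inter> {s. \<exists>e\<in>err_set s. collinear_pair e w} = aligned w"
    unfolding aligned_def ex_err_collinear_iff[OF assms] by blast
  then show ?thesis by (simp add: q_eq_card)
qed

lemma collinear_pair_zero: "collinear_pair e 0"
  unfolding collinear_pair_def by (intro exI[of _ e] exI[of _ 1] exI[of _ 0]) simp

lemma q_zero: "q (0 :: complex ^ 'd) = 1"
proof -
  have "s \<in> QPSK_vecs \<Longrightarrow> \<exists>e\<in>err_set s. collinear_pair e 0" for s :: "complex ^ 'd"
  proof -
    assume s: "s \<in> QPSK_vecs"
    then have "- s \<in> QPSK_vecs" by (simp add: QPSK_vecs_def QPSK_uminus)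
    moreover have "- s \<noteq> s"
    proof
      assume "- s = s"
      then have "- (s $ j) = s $ j" for j by (metis vector_uminus_component)
      moreover have "s $ j \<noteq> 0" for j using s QPSK_nonzero unfolding QPSK_vecs_def by blast
      ultimately show False by (simp add: complex_eq_iff)
    qed
    ultimately show ?thesis unfolding err_set_def using collinear_pair_zero by blast
  qed
  then have "QPSK_vecs \<inter> {s. \<exists>e\<in>err_set s. collinear_pair e (0 :: complex ^ 'd)} = QPSK_vecs"
    by blast
  then show ?thesis by (simp add: q_eq_card card_QPSK_vecs)
qed

section \<open>Counting by the symbol at one coordinate\<close>

definition pinned_dom :: "complex ^ 'd \<Rightarrow> 'd \<Rightarrow> complex \<Rightarrow> complex \<Rightarrow> 'd \<Rightarrow> complex set" where
  "pinned_dom w k s0 c j = {x \<in> shift_dom (c * w $ j). j = k \<longrightarrow> x = s0}"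

lemma finite_pinned_dom [simp]: "finite (pinned_dom w k s0 c j)"
  by (simp add: pinned_dom_def)

lemma pinned_dom_other: "j \<noteq> k \<Longrightarrow> pinned_dom w k s0 c j = shift_dom (c * w $ j)"
  by (simp add: pinned_dom_def)

lemma mem_vec_Pi_pinned_dom:
  "s \<in> vec_Pi (pinned_dom w k s0 c) \<longleftrightarrow> s \<in> QPSK_vecs \<and> s + c *s w \<in> QPSK_vecs \<and> s $ k = s0"
  by (auto simp: vec_Pi_def pinned_dom_def shift_dom_def QPSK_vecs_def)

lemma pinned_dom_pin:
  assumes "s0 \<in> QPSK" "c * w $ k = (\<i> - 1) * s0"
  shows "pinned_dom w k s0 c k = {s0}" "pinned_dom w k s0 (\<i> * c) k = {s0}"
proof -
  have "c * w $ k \<noteq> 0" using assms i_minus_1_mult_QPSK_nonzero by simp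
  then have "s0 \<in> shift_dom (c * w $ k) \<inter> shift_dom (\<i> * (c * w $ k))"
    using shift_dom_Int_mult_i_iff assms by blast
  then show "pinned_dom w k s0 c k = {s0}" "pinned_dom w k s0 (\<i> * c) k = {s0}"
    by (auto simp: pinned_dom_def mult.assoc)
qed

lemma card_pinned_dom_mult_i:
  assumes "s0 \<in> QPSK" "c * w $ k = (\<i> - 1) * s0"
  shows "card (pinned_dom w k s0 (\<i> * c) j) = card (pinned_dom w k s0 c j)"
proof (cases "j = k")
  case True
  then show ?thesis using pinned_dom_pin[OF assms] by simp
next
  case False
  then show ?thesis by (simp add: pinned_dom_other card_shift_dom_mult_i mult.assoc)
qed

lemma pinned_dom_mult_1_plus_i:
  assumes "pinned_dom w k s0 c j \<noteq> {}"
  shows "pinned_dom w k s0 ((1 + \<i>) * c) j \<subseteq> pinned_dom w k s0 c j \<inter> pinned_dom w k s0 (\<i> * c) j"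
proof -
  have "shift_dom (c * w $ j) \<noteq> {}" using assms by (auto simp: pinned_dom_def)
  then have "shift_dom ((1 + \<i>) * (c * w $ j)) \<subseteq> shift_dom (c * w $ j) \<inter> shift_dom (\<i> * (c * w $ j))"
    by (rule shift_dom_mult_1_plus_i)
  then show ?thesis by (auto simp: pinned_dom_def mult.assoc)
qed

definition factor_bound :: "complex ^ 'd \<Rightarrow> 'd \<Rightarrow> 'd \<Rightarrow> nat" where
  "factor_bound w k j = (if j = k then 1 else if w $ j \<noteq> 0 then 2 else 4)"

definition overlap_bound :: "complex ^ 'd \<Rightarrow> 'd \<Rightarrow> nat" where
  "overlap_bound w j = (if w $ j \<noteq> 0 then 1 else 4)"

lemma prod_factor_bound:
  fixes w :: "complex ^ 'd"
  assumes "w $ k \<noteq> 0"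
  shows "(\<Prod>j\<in>UNIV. factor_bound w k j) = 2 ^ (norm0 w - 1) * 4 ^ (CARD('d) - norm0 w)"
proof -
  let ?T = "{j. w $ j \<noteq> 0}"
  have "(\<Prod>j\<in>UNIV. factor_bound w k j) = (\<Prod>j\<in>UNIV - ?T. factor_bound w k j) * (\<Prod>j\<in>?T. factor_bound w k j)"
    by (rule prod.subset_diff) auto
  also have "(\<Prod>j\<in>UNIV - ?T. factor_bound w k j) = (\<Prod>j\<in>UNIV - ?T. 4)"
    using assms by (intro prod.cong) (auto simp: factor_bound_def)
  also have "\<dots> = 4 ^ (CARD('d) - norm0 w)"
    by (simp add: card_Diff_subset norm0_def)
  also have "(\<Prod>j\<in>?T. factor_bound w k j) = factor_bound w k k * (\<Prod>j\<in>?T - {k}. factor_bound w k j)"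
    by (rule prod.remove) (auto simp: assms)
  also have "(\<Prod>j\<in>?T - {k}. factor_bound w k j) = 2 ^ (norm0 w - 1)"
    using assms by (simp add: factor_bound_def norm0_def)
  finally show ?thesis by (simp add: factor_bound_def)
qed

lemma prod_overlap_bound:
  fixes w :: "complex ^ 'd"
  shows "(\<Prod>j\<in>UNIV. overlap_bound w j) = 4 ^ (CARD('d) - norm0 w)"
proof -
  let ?T = "{j. w $ j \<noteq> 0}"
  have "(\<Prod>j\<in>UNIV. overlap_bound w j) = (\<Prod>j\<in>UNIV - ?T. overlap_bound w j) * (\<Prod>j\<in>?T. overlap_bound w j)"
    by (rule prod.subset_diff) auto
  then show ?thesis by (simp add: overlap_bound_def card_Diff_subset norm0_def)
qed

lemma card_pinned_dom_le:
  assumes "c \<noteq> 0"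
  shows "card (pinned_dom w k s0 c j) \<le> factor_bound w k j"
proof -
  consider "j = k" | "j \<noteq> k" "w $ j \<noteq> 0" | "j \<noteq> k" "w $ j = 0" by blast
  then show ?thesis
  proof cases
    case 1
    then have "pinned_dom w k s0 c j \<subseteq> {s0}" by (auto simp: pinned_dom_def)
    from card_mono[OF _ this] show ?thesis using 1 by (simp add: factor_bound_def)
  next
    case 2
    then show ?thesis
      using card_shift_dom_le[of "c * w $ j"] assms by (simp add: pinned_dom_other factor_bound_def)
  next
    case 3
    then show ?thesis by (simp add: pinned_dom_other factor_bound_def card_QPSK)
  qed
qed

lemma pinned_dom_gap:
  assumes "s0 \<in> QPSK" "c * w $ k = (\<i> - 1) * s0"
    and "card (pinned_dom w k s0 c j) < factor_bound w k j"
  shows "2 * card (pinned_dom w k s0 c j) \<le> factor_bound w k j"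
proof -
  have "j \<noteq> k" using assms pinned_dom_pin(1)[OF assms(1,2)] by (auto simp: factor_bound_def)
  moreover from this have "w $ j \<noteq> 0"
    using assms(3) by (auto simp: factor_bound_def pinned_dom_other card_QPSK)
  ultimately show ?thesis using assms(3) by (simp add: factor_bound_def)
qed

lemma pinned_dom_full:
  assumes "s0 \<in> QPSK" "c * w $ k = (\<i> - 1) * s0"
    and "card (pinned_dom w k s0 c j) = factor_bound w k j"
  shows "overlap_bound w j \<le> card (pinned_dom w k s0 c j \<inter> pinned_dom w k s0 (\<i> * c) j)"
proof -
  consider "j = k" | "j \<noteq> k" "w $ j \<noteq> 0" | "j \<noteq> k" "w $ j = 0" by blast
  then show ?thesis
  proof cases
    case 1
    have "w $ k \<noteq> 0" using assms(2) i_minus_1_mult_QPSK_nonzero[OF assms(1)] by force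
    then show ?thesis using 1 pinned_dom_pin[OF assms(1,2)] by (simp add: overlap_bound_def)
  next
    case 2
    then have "card (shift_dom (c * w $ j)) = 2"
      using assms(3) by (simp add: factor_bound_def pinned_dom_other)
    then have "shift_dom (c * w $ j) \<inter> shift_dom (\<i> * (c * w $ j)) \<noteq> {}"
      by (rule shift_dom_Int_mult_i_nonempty)
    then show ?thesis
      using 2 by (simp add: overlap_bound_def pinned_dom_other mult.assoc card_gt_0_iff Suc_le_eq)
  next
    case 3
    then show ?thesis by (simp add: overlap_bound_def pinned_dom_other card_QPSK)
  qed
qed

lemma aligned_fibre_eq:
  assumes "w $ k \<noteq> 0" "s0 \<in> QPSK" "a * w $ k = (\<i> - 1) * s0"
  shows "{s \<in> aligned w. s $ k = s0} = vec_Pi (pinned_dom w k s0 a)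
      \<union> vec_Pi (pinned_dom w k s0 (\<i> * a)) \<union> vec_Pi (pinned_dom w k s0 ((1 + \<i>) * a))"
    (is "?F = ?B \<union> ?C \<union> ?E")
proof
  show "?F \<subseteq> ?B \<union> ?C \<union> ?E"
  proof
    fix s assume "s \<in> ?F"
    then obtain c where c: "c \<noteq> 0" "s \<in> QPSK_vecs" "s + c *s w \<in> QPSK_vecs" "s $ k = s0"
      unfolding aligned_def by blast
    then have "s0 + c * w $ k \<in> QPSK" by (auto simp: QPSK_vecs_def)
    moreover have "c * w $ k \<noteq> 0" using c(1) assms(1) by simp
    ultimately have "c * w $ k \<in> {(\<i> - 1) * s0, - 2 * s0, - (1 + \<i>) * s0}"
      using QPSK_add_iff[OF assms(2)] by simp
    also have "\<dots> = {a * w $ k, ((1 + \<i>) * a) * w $ k, (\<i> * a) * w $ k}"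
    proof -
      have "(1 + \<i>) * (\<i> - 1) = - 2" "\<i> * (\<i> - 1) = - (1 + \<i>)" by (simp_all add: complex_eq_iff)
      then show ?thesis by (simp add: assms(3) mult.assoc) (simp add: mult.assoc[symmetric])
    qed
    finally have "c \<in> {a, \<i> * a, (1 + \<i>) * a}" using assms(1) by auto
    then show "s \<in> ?B \<union> ?C \<union> ?E" using c by (auto simp: mem_vec_Pi_pinned_dom)
  qed
next
  have "a \<noteq> 0" using assms(3) i_minus_1_mult_QPSK_nonzero[OF assms(2)] by auto
  moreover have "1 + \<i> \<noteq> 0" by (simp add: complex_eq_iff)
  moreover have "vec_Pi (pinned_dom w k s0 c) \<subseteq> ?F" if "c \<noteq> 0" for c
    using that by (auto simp: mem_vec_Pi_pinned_dom aligned_def)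
  ultimately show "?B \<union> ?C \<union> ?E \<subseteq> ?F" by simp
qed

lemma norm0_le_CARD: "norm0 (w :: complex ^ 'd) \<le> CARD('d)"
  unfolding norm0_def by (rule card_mono) auto

lemma norm0_pos: "w $ k \<noteq> 0 \<Longrightarrow> 0 < norm0 w"
  unfolding norm0_def by (auto simp: card_gt_0_iff)

lemma norm0_eq_0_iff: "norm0 w = 0 \<longleftrightarrow> w = 0"
  unfolding norm0_def by (auto simp: vec_eq_iff)

lemma double_pow2_minus:
  fixes K :: nat
  assumes "0 < n"
  shows "2 * (2 ^ (n - 1) * K) - K = (2 ^ n - 1) * K"
proof -
  obtain m where "n = Suc m" using assms gr0_implies_Suc by blast
  then show ?thesis by (simp add: diff_mult_distrib)
qed

lemma factor_overlap_bound_eq: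
  fixes w :: "complex ^ 'd"
  assumes "w $ k \<noteq> 0"
  shows "2 * (\<Prod>j\<in>UNIV. factor_bound w k j) - (\<Prod>j\<in>UNIV. overlap_bound w j)
    = (2 ^ norm0 w - 1) * 4 ^ (CARD('d) - norm0 w)"
  unfolding prod_factor_bound[OF assms] prod_overlap_bound[of w]
  by (rule double_pow2_minus[OF norm0_pos[OF assms]])

lemma card_aligned_fibre_le:
  fixes w :: "complex ^ 'd"
  assumes "w $ k \<noteq> 0" "s0 \<in> QPSK"
  shows "card {s \<in> aligned w. s $ k = s0} \<le> (2 ^ norm0 w - 1) * 4 ^ (CARD('d) - norm0 w)"
proof -
  define a where "a = (\<i> - 1) * s0 / w $ k"
  have aw: "a * w $ k = (\<i> - 1) * s0" using assms(1) by (simp add: a_def)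
  have "a \<noteq> 0" using aw i_minus_1_mult_QPSK_nonzero[OF assms(2)] by auto
  moreover have "1 + \<i> \<noteq> 0" by (simp add: complex_eq_iff)
  ultimately have "(1 + \<i>) * a \<noteq> 0" by simp
  have "card {s \<in> aligned w. s $ k = s0}
      \<le> 2 * (\<Prod>j\<in>UNIV. factor_bound w k j) - (\<Prod>j\<in>UNIV. overlap_bound w j)"
    unfolding aligned_fibre_eq[OF assms aw]
  proof (rule card_vec_Pi_Un3_le)
    show "card (pinned_dom w k s0 (\<i> * a) j) = card (pinned_dom w k s0 a j)" for j
      by (rule card_pinned_dom_mult_i[OF assms(2) aw])
    show "card (pinned_dom w k s0 a j) \<le> factor_bound w k j" for j
      by (rule card_pinned_dom_le) fact
    show "card (pinned_dom w k s0 ((1 + \<i>) * a) j) \<le> factor_bound w k j" for j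
      by (rule card_pinned_dom_le) fact
    show "card (pinned_dom w k s0 a j) < factor_bound w k j \<Longrightarrow>
        2 * card (pinned_dom w k s0 a j) \<le> factor_bound w k j" for j
      by (rule pinned_dom_gap[OF assms(2) aw])
    show "card (pinned_dom w k s0 a j) = factor_bound w k j \<Longrightarrow>
        overlap_bound w j \<le> card (pinned_dom w k s0 a j \<inter> pinned_dom w k s0 (\<i> * a) j)" for j
      by (rule pinned_dom_full[OF assms(2) aw])
    show "pinned_dom w k s0 a j \<noteq> {} \<Longrightarrow>
        pinned_dom w k s0 ((1 + \<i>) * a) j \<subseteq> pinned_dom w k s0 a j \<inter> pinned_dom w k s0 (\<i> * a) j" for j
      by (rule pinned_dom_mult_1_plus_i)
    show "(\<Prod>j\<in>UNIV. overlap_bound w j) \<le> (\<Prod>j\<in>UNIV. factor_bound w k j)"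
      using assms(1) by (intro prod_mono) (simp add: overlap_bound_def factor_bound_def)
  qed simp_all
  then show ?thesis unfolding factor_overlap_bound_eq[OF assms(1)] .
qed

lemma card_aligned_fibre_ge:
  fixes w :: "complex ^ 'd"
  assumes "w $ k \<noteq> 0" "\<And>j. w $ j \<noteq> 0 \<Longrightarrow> w $ j = w $ k" "s0 \<in> QPSK"
  shows "(2 ^ norm0 w - 1) * 4 ^ (CARD('d) - norm0 w) \<le> card {s \<in> aligned w. s $ k = s0}"
proof -
  define a where "a = (\<i> - 1) * s0 / w $ k"
  have aw: "a * w $ k = (\<i> - 1) * s0" using assms(1) by (simp add: a_def)
  have "(2 ^ norm0 w - 1) * 4 ^ (CARD('d) - norm0 w)
      = 2 * (\<Prod>j\<in>UNIV. factor_bound w k j) - (\<Prod>j\<in>UNIV. overlap_bound w j)"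
    by (rule factor_overlap_bound_eq[OF assms(1), symmetric])
  also have "\<dots> \<le> card (vec_Pi (pinned_dom w k s0 a) \<union> vec_Pi (pinned_dom w k s0 (\<i> * a)))"
  proof (rule card_vec_Pi_Un_ge)
    show "card (pinned_dom w k s0 (\<i> * a) j) = card (pinned_dom w k s0 a j)" for j
      by (rule card_pinned_dom_mult_i[OF assms(3) aw])
    have "factor_bound w k j \<le> card (pinned_dom w k s0 a j) \<and>
        card (pinned_dom w k s0 a j \<inter> pinned_dom w k s0 (\<i> * a) j) \<le> overlap_bound w j" for j
    proof -
      consider "j = k" | "j \<noteq> k" "w $ j \<noteq> 0" | "j \<noteq> k" "w $ j = 0" by blast
      then show ?thesis
      proof cases
        case 1
        then show ?thesis using pinned_dom_pin[OF assms(3) aw] assms(1)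
          by (simp add: factor_bound_def overlap_bound_def)
      next
        case 2
        then have "a * w $ j = (\<i> - 1) * s0" using assms(2) aw by simp
        then show ?thesis
          using 2 card_shift_dom_i_minus_1_ge[OF assms(3)]
            card_shift_dom_Int_mult_i_le[OF i_minus_1_mult_QPSK_nonzero[OF assms(3)]]
          by (simp add: factor_bound_def overlap_bound_def pinned_dom_other mult.assoc)
      next
        case 3
        then show ?thesis by (simp add: factor_bound_def overlap_bound_def pinned_dom_other card_QPSK)
      qed
    qed
    then show "factor_bound w k j \<le> card (pinned_dom w k s0 a j)"
      and "card (pinned_dom w k s0 a j \<inter> pinned_dom w k s0 (\<i> * a) j) \<le> overlap_bound w j" for j
      by blast+
  qed simp_all
  also have "\<dots> \<le> card {s \<in> aligned w. s $ k = s0}"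
  proof (rule card_mono)
    show "finite {s \<in> aligned w. s $ k = s0}"
      using finite_QPSK_vecs by (rule finite_subset[rotated]) (auto simp: aligned_def)
    show "vec_Pi (pinned_dom w k s0 a) \<union> vec_Pi (pinned_dom w k s0 (\<i> * a)) \<subseteq> {s \<in> aligned w. s $ k = s0}"
      unfolding aligned_fibre_eq[OF assms(1,3) aw] by blast
  qed
  finally show ?thesis .
qed

lemma card_aligned_eq_sum:
  "card (aligned w) = (\<Sum>s0\<in>QPSK. card {s \<in> aligned w. s $ k = s0})"
proof -
  have "aligned w = (\<Union>s0\<in>QPSK. {s \<in> aligned w. s $ k = s0})"
    by (auto simp: aligned_def QPSK_vecs_def)
  moreover have "finite {s \<in> aligned w. s $ k = s0}" for s0
    using finite_QPSK_vecs by (rule finite_subset[rotated]) (auto simp: aligned_def)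
  moreover have "card (\<Union>s0\<in>QPSK. {s \<in> aligned w. s $ k = s0})
      = (\<Sum>s0\<in>QPSK. card {s \<in> aligned w. s $ k = s0})"
    using calculation(2) by (intro card_UN_disjoint) (auto simp: finite_QPSK)
  ultimately show ?thesis by simp
qed

lemma fibre_bound_div_pow:
  assumes "0 < n" "n \<le> D"
  shows "real (4 * ((2 ^ n - 1) * 4 ^ (D - n))) / 4 ^ D = (2 ^ n - 1) / 4 ^ (n - 1)"
proof -
  have "D = Suc ((n - 1) + (D - n))" using assms by arith
  then have "(4::real) ^ D = 4 * (4 ^ (n - 1) * 4 ^ (D - n))" by (metis power_Suc power_add)
  moreover have "real (2 ^ n - 1 :: nat) = 2 ^ n - 1" by simp
  ultimately show ?thesis by (simp add: field_simps)
qed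

lemma card_aligned_le:
  fixes w :: "complex ^ 'd"
  assumes "w $ k \<noteq> 0"
  shows "card (aligned w) \<le> 4 * ((2 ^ norm0 w - 1) * 4 ^ (CARD('d) - norm0 w))"
  unfolding card_aligned_eq_sum[of w k]
  using sum_bounded_above[of QPSK "\<lambda>s0. card {s \<in> aligned w. s $ k = s0}"]
    card_aligned_fibre_le[OF assms] by (simp add: card_QPSK)

lemma card_aligned_ge:
  fixes w :: "complex ^ 'd"
  assumes "w $ k \<noteq> 0" "\<And>j. w $ j \<noteq> 0 \<Longrightarrow> w $ j = w $ k"
  shows "4 * ((2 ^ norm0 w - 1) * 4 ^ (CARD('d) - norm0 w)) \<le> card (aligned w)"
  unfolding card_aligned_eq_sum[of w k]
  using sum_bounded_below[of QPSK "(2 ^ norm0 w - 1) * 4 ^ (CARD('d) - norm0 w)"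
      "\<lambda>s0. card {s \<in> aligned w. s $ k = s0}"]
    card_aligned_fibre_ge[OF assms] by (simp add: card_QPSK)

lemma q_le:
  fixes w :: "complex ^ 'd"
  assumes "w \<noteq> 0"
  shows "q w \<le> (2 ^ norm0 w - 1) / 4 ^ (norm0 w - 1)"
proof -
  obtain k where k: "w $ k \<noteq> 0" using assms by (auto simp: vec_eq_iff)
  have "real (card (aligned w)) / 4 ^ CARD('d)
      \<le> real (4 * ((2 ^ norm0 w - 1) * 4 ^ (CARD('d) - norm0 w))) / 4 ^ CARD('d)"
    using card_aligned_le[OF k] by (intro divide_right_mono of_nat_mono) simp_all
  then show ?thesis
    unfolding q_eq_card_aligned[OF assms] fibre_bound_div_pow[OF norm0_pos[OF k] norm0_le_CARD] .
qed

lemma q_eq_of_equal_entries: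
  fixes w :: "complex ^ 'd"
  assumes "w $ k \<noteq> 0" "\<And>j. w $ j \<noteq> 0 \<Longrightarrow> w $ j = w $ k"
  shows "q w = (2 ^ norm0 w - 1) / 4 ^ (norm0 w - 1)"
proof (rule antisym)
  have "w \<noteq> 0" using assms(1) by auto
  then show "q w \<le> (2 ^ norm0 w - 1) / 4 ^ (norm0 w - 1)" by (rule q_le)
  have "real (4 * ((2 ^ norm0 w - 1) * 4 ^ (CARD('d) - norm0 w))) / 4 ^ CARD('d)
      \<le> real (card (aligned w)) / 4 ^ CARD('d)"
    using card_aligned_ge[OF assms] by (intro divide_right_mono of_nat_mono) simp_all
  then show "(2 ^ norm0 w - 1) / 4 ^ (norm0 w - 1) \<le> q w"
    unfolding q_eq_card_aligned[OF \<open>w \<noteq> 0\<close>] fibre_bound_div_pow[OF norm0_pos[OF assms(1)] norm0_le_CARD] .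
qed

theorem lemma4:
  fixes n :: nat
  assumes "n \<le> CARD('d::finite)"
  shows "(\<exists>w :: complex ^ 'd. norm0 w = n \<and>
            q w = (if n = 0 then 1 else (2 ^ n - 1) / 4 ^ (n - 1))) \<and>
         (\<forall>w :: complex ^ 'd. norm0 w = n \<longrightarrow>
            q w \<le> (if n = 0 then 1 else (2 ^ n - 1) / 4 ^ (n - 1)))"
proof (cases "n = 0")
  case True
  have "norm0 (0 :: complex ^ 'd) = 0" by (simp add: norm0_eq_0_iff)
  moreover have "q w \<le> 1" if "norm0 w = 0" for w :: "complex ^ 'd"
    using that by (simp add: norm0_eq_0_iff q_zero)
  ultimately show ?thesis using True q_zero by auto
next
  case False
  obtain T :: "'d set" where "card T = n" using obtain_subset_with_card_n[OF assms] by blast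
  then obtain k where "k \<in> T" using False by (metis card.empty ex_in_conv)
  define w :: "complex ^ 'd" where "w = (\<chi> j. if j \<in> T then 1 else 0)"
  have "norm0 w = n" using \<open>card T = n\<close> by (simp add: norm0_def w_def)
  moreover have "w $ k \<noteq> 0" "\<And>j. w $ j \<noteq> 0 \<Longrightarrow> w $ j = w $ k"
    using \<open>k \<in> T\<close> by (auto simp: w_def split: if_splits)
  then have "q w = (2 ^ n - 1) / 4 ^ (n - 1)"
    using q_eq_of_equal_entries \<open>norm0 w = n\<close> by metis
  moreover have "q w' \<le> (2 ^ n - 1) / 4 ^ (n - 1)" if "norm0 w' = n" for w' :: "complex ^ 'd"
    using q_le[of w'] that False norm0_eq_0_iff[of w'] by auto
  ultimately show ?thesis using False by auto
qed

end
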